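(* Under the model of Theorem 2.2 ($\boldsymbol{X}_i=\mathbf{T}\boldsymbol{\epsilon}_i$, $\mathbf{T}=\mathbf{R}^{1/2}$, $\mathbf{R}=(r_{|i-j|})$ a positive definite Toeplitz correlation matrix with $r_k>0$, $\boldsymbol{\epsilon}_i$ with i.i.d. components of mean $0$, variance $1$, fourth moment $\kappa_4$), let $n\ge3$, $y_{k,(i,j)}=(x_{i,k}-x_{j,k})^2$, $\boldsymbol{Y}_t=(y_{t,(i,j)})_{1\le i<j\le n}\in\mathbb{R}^{n(n-1)/2}$ and $\boldsymbol{S}_p=p^{-1/2}\sum_{t=1}^p\boldsymbol{Y}_t$. Then $$\mathrm{Cov}(\boldsymbol{S}_p)=b_p\boldsymbol{\Sigma}_p,\qquad b_p=p^{-1}\left(8\|(\mathbf{T}^2)^{\odot2}\|+2(\kappa_4-3)\|(\mathbf{T}^{\odot2})^2\|\right),$$ where $\boldsymbol{\Sigma}_p$ is the matrix indexed by pairs $1\le i<j\le n$ with entries $1$ on the diagonal, $\rho_p$ for two distinct pairs sharing an index, and $0$ for disjoint pairs, with $$\rho_p=\frac{2\|(\mathbf{T}^2)^{\odot2}\|+(\kappa_4-3)\|(\mathbf{T}^{\odot2})^2\|}{8\|(\mathbf{T}^2)^{\odot2}\|+2(\kappa_4-3)\|(\mathbf{T}^{\odot2})^2\|}.$$ Moreover $\|(\mathbf{T}^2)^{\odot2}\|\ge\|(\mathbf{T}^{\odot2})^2\|$, $b_p\ge 2$, and if $\kappa_4\le5$ then $\rho_p\le 1/3$.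
   Context: For a matrix $\mathbf{A}$, $\|\mathbf{A}\|=\sum_{i}\sum_{j}|(\mathbf{A})_{ij}|$; $\odot$ is the Hadamard product and $\mathbf{A}^{\odot2}=\mathbf{A}\odot\mathbf{A}$. $\boldsymbol{X}_i=(x_{i,1},\dots,x_{i,p})^T$. *)

theory Defs
  imports "HOL-Probability.Probability"
begin

text \<open>Matrices of size p x p are functions nat => nat => real, indices 0..p-1.\<close>

definition mmul :: "nat \<Rightarrow> (nat \<Rightarrow> nat \<Rightarrow> real) \<Rightarrow> (nat \<Rightarrow> nat \<Rightarrow> real) \<Rightarrow> nat \<Rightarrow> nat \<Rightarrow> real" where
  "mmul p A B i j = (\<Sum>k<p. A i k * B k j)"

definition hadamard :: "(nat \<Rightarrow> nat \<Rightarrow> real) \<Rightarrow> (nat \<Rightarrow> nat \<Rightarrow> real) \<Rightarrow> nat \<Rightarrow> nat \<Rightarrow> real" where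
  "hadamard A B i j = A i j * B i j"

definition entry_norm :: "nat \<Rightarrow> (nat \<Rightarrow> nat \<Rightarrow> real) \<Rightarrow> real" where
  "entry_norm p A = (\<Sum>i<p. \<Sum>j<p. \<bar>A i j\<bar>)"

definition symmetric_mat :: "nat \<Rightarrow> (nat \<Rightarrow> nat \<Rightarrow> real) \<Rightarrow> bool" where
  "symmetric_mat p A \<longleftrightarrow> (\<forall>i<p. \<forall>j<p. A i j = A j i)"

definition pos_semidef_mat :: "nat \<Rightarrow> (nat \<Rightarrow> nat \<Rightarrow> real) \<Rightarrow> bool" where
  "pos_semidef_mat p A \<longleftrightarrow> symmetric_mat p A \<and>
     (\<forall>v::nat \<Rightarrow> real. (\<Sum>i<p. \<Sum>j<p. v i * A i j * v j) \<ge> 0)"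

definition pos_def_mat :: "nat \<Rightarrow> (nat \<Rightarrow> nat \<Rightarrow> real) \<Rightarrow> bool" where
  "pos_def_mat p A \<longleftrightarrow> symmetric_mat p A \<and>
     (\<forall>v::nat \<Rightarrow> real. (\<exists>i<p. v i \<noteq> 0) \<longrightarrow> (\<Sum>i<p. \<Sum>j<p. v i * A i j * v j) > 0)"

definition is_psd_sqrt :: "nat \<Rightarrow> (nat \<Rightarrow> nat \<Rightarrow> real) \<Rightarrow> (nat \<Rightarrow> nat \<Rightarrow> real) \<Rightarrow> bool" where
  "is_psd_sqrt p T R \<longleftrightarrow> pos_semidef_mat p T \<and> (\<forall>i<p. \<forall>j<p. mmul p T T i j = R i j)"

definition toeplitz :: "(nat \<Rightarrow> real) \<Rightarrow> nat \<Rightarrow> nat \<Rightarrow> real" where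
  "toeplitz r i j = r (if i \<le> j then j - i else i - j)"

definition (in prob_space) covariance :: "('a \<Rightarrow> real) \<Rightarrow> ('a \<Rightarrow> real) \<Rightarrow> real" where
  "covariance f g = expectation (\<lambda>\<omega>. f \<omega> * g \<omega>) - expectation f * expectation g"

text \<open>Data: X_i = T eps_i, samples i = 0..n-1, component k = 0..p-1.\<close>
definition obsX :: "nat \<Rightarrow> (nat \<Rightarrow> nat \<Rightarrow> real) \<Rightarrow> (nat \<Rightarrow> nat \<Rightarrow> 'a \<Rightarrow> real) \<Rightarrow> nat \<Rightarrow> nat \<Rightarrow> 'a \<Rightarrow> real" where
  "obsX p T eps i k \<omega> = (\<Sum>l<p. T k l * eps i l \<omega>)"

definition yvar :: "nat \<Rightarrow> (nat \<Rightarrow> nat \<Rightarrow> real) \<Rightarrow> (nat \<Rightarrow> nat \<Rightarrow> 'a \<Rightarrow> real) \<Rightarrow> nat \<Rightarrow> nat \<Rightarrow> nat \<Rightarrow> 'a \<Rightarrow> real" where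
  "yvar p T eps k i j \<omega> = (obsX p T eps i k \<omega> - obsX p T eps j k \<omega>)^2"

definition Svar :: "nat \<Rightarrow> (nat \<Rightarrow> nat \<Rightarrow> real) \<Rightarrow> (nat \<Rightarrow> nat \<Rightarrow> 'a \<Rightarrow> real) \<Rightarrow> nat \<Rightarrow> nat \<Rightarrow> 'a \<Rightarrow> real" where
  "Svar p T eps i j \<omega> = (1 / sqrt (real p)) * (\<Sum>t<p. yvar p T eps t i j \<omega>)"

definition Sigma_entry :: "real \<Rightarrow> nat \<times> nat \<Rightarrow> nat \<times> nat \<Rightarrow> real" where
  "Sigma_entry \<rho> a b = (if a = b then 1
      else if {fst a, snd a} \<inter> {fst b, snd b} \<noteq> {} then \<rho> else 0)"

end

theory Submission
  imports Defs
begin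

text \<open>Each difference x(i,t) - x(j,t) is a linear form in the independent standardized entries
eps(x,l), with coefficients T(t,l) (e_i - e_j)(x). Independence gives
E[eps_a eps_b eps_c eps_d] = \<delta>ab \<delta>cd + \<delta>ac \<delta>bd + \<delta>ad \<delta>bc + (\<kappa>4 - 3) \<delta>abcd, hence
Cov((u.eps)^2, (v.eps)^2) = 2 (u.v)^2 + (\<kappa>4 - 3) \<Sum>a u_a^2 v_a^2. Both terms factor into a part that
depends only on the index pairs (i,j), (k,l), which produces the pattern of \<Sigma>_p, and a part that
depends only on T and sums to ||(T^2)^\<odot>2|| resp. ||(T^\<odot>2)^2||. Since T^2 = R has unit diagonal, the
second norm equals p and the first is at least p; together with \<kappa>4 \<ge> (E eps^2)^2 = 1 this yields the
bounds on b_p and \<rho>_p.\<close>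

lemma abs_power_le_one_plus_abs_power:
  fixes x :: real
  assumes "k \<le> m"
  shows "\<bar>x ^ k\<bar> \<le> 1 + \<bar>x ^ m\<bar>"
proof (cases "\<bar>x\<bar> \<le> 1")
  case True
  then have "\<bar>x\<bar> ^ k \<le> 1" by (simp add: power_le_one)
  then show ?thesis unfolding power_abs using zero_le_power[of "\<bar>x\<bar>" m] by linarith
next
  case False
  then have "\<bar>x\<bar> ^ k \<le> \<bar>x\<bar> ^ m" using assms by (intro power_increasing) auto
  then show ?thesis by (simp add: power_abs)
qed

lemma (in finite_measure) integrable_power_le:
  fixes f :: "'a \<Rightarrow> real"
  assumes [measurable]: "f \<in> borel_measurable M"
    and "integrable M (\<lambda>x. f x ^ m)" and "k \<le> m"
  shows "integrable M (\<lambda>x. f x ^ k)"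
proof (rule Bochner_Integration.integrable_bound)
  show "integrable M (\<lambda>x. 1 + \<bar>f x ^ m\<bar>)" using assms(2) by simp
  show "AE x in M. norm (f x ^ k) \<le> norm (1 + \<bar>f x ^ m\<bar>)"
    using abs_power_le_one_plus_abs_power[OF \<open>k \<le> m\<close>] by (auto intro!: AE_I2)
qed measurable

lemma (in prob_space) square_second_moment_le_fourth_moment:
  fixes f :: "'a \<Rightarrow> real"
  assumes [measurable]: "f \<in> borel_measurable M" and "integrable M (\<lambda>x. f x ^ 4)"
  shows "(expectation (\<lambda>x. f x ^ 2))\<^sup>2 \<le> expectation (\<lambda>x. f x ^ 4)"
proof -
  have fourth: "(\<lambda>x. (f x ^ 2)\<^sup>2) = (\<lambda>x. f x ^ 4)"
    by (simp flip: power_mult)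
  have "integrable M (\<lambda>x. f x ^ 2)" by (rule integrable_power_le[OF assms]) simp
  then have "variance (\<lambda>x. f x ^ 2) = expectation (\<lambda>x. f x ^ 4) - (expectation (\<lambda>x. f x ^ 2))\<^sup>2"
    using variance_eq[of "\<lambda>x. f x ^ 2"] assms(2) unfolding fourth by blast
  then show ?thesis using variance_positive[of "\<lambda>x. f x ^ 2"] by linarith
qed

lemma (in prob_space) covariance_scale:
  "covariance (\<lambda>\<omega>. c * f \<omega>) (\<lambda>\<omega>. d * g \<omega>) = c * d * covariance f g"
  by (simp add: covariance_def algebra_simps)

locale standardized_indep_family = prob_space +
  fixes X :: "'i \<Rightarrow> 'a \<Rightarrow> real" and I :: "'i set" and \<kappa> :: real
  assumes indep: "indep_vars (\<lambda>_. borel) X I"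
    and finite_index: "finite I"
    and measurable_X [measurable]: "\<And>a. a \<in> I \<Longrightarrow> X a \<in> borel_measurable M"
    and integrable_fourth: "\<And>a. a \<in> I \<Longrightarrow> integrable M (\<lambda>\<omega>. X a \<omega> ^ 4)"
    and mean_zero: "\<And>a. a \<in> I \<Longrightarrow> expectation (X a) = 0"
    and second_moment: "\<And>a. a \<in> I \<Longrightarrow> expectation (\<lambda>\<omega>. X a \<omega> ^ 2) = 1"
    and fourth_moment: "\<And>a. a \<in> I \<Longrightarrow> expectation (\<lambda>\<omega>. X a \<omega> ^ 4) = \<kappa>"
begin

lemma integrable_power:
  assumes "a \<in> I" "k \<le> 4"
  shows "integrable M (\<lambda>\<omega>. X a \<omega> ^ k)"
  using assms by (intro integrable_power_le[OF measurable_X integrable_fourth]) auto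

lemma fourth_moment_ge_one:
  assumes "I \<noteq> {}"
  shows "1 \<le> \<kappa>"
proof -
  obtain a where "a \<in> I" using assms by blast
  then show ?thesis
    using square_second_moment_le_fourth_moment[OF measurable_X integrable_fourth]
    by (simp add: second_moment fourth_moment)
qed

lemma
  assumes "set_mset N \<subseteq> I" "\<And>a. count N a \<le> 4"
  shows integrable_prod_mset: "integrable M (\<lambda>\<omega>. \<Prod>a\<in>#N. X a \<omega>)"
    and expectation_prod_mset:
      "expectation (\<lambda>\<omega>. \<Prod>a\<in>#N. X a \<omega>) = (\<Prod>a\<in>set_mset N. expectation (\<lambda>\<omega>. X a \<omega> ^ count N a))"
proof -
  have prod_eq: "(\<Prod>a\<in>#N. X a \<omega>) = (\<Prod>a\<in>set_mset N. X a \<omega> ^ count N a)" for \<omega>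
    by (rule image_prod_mset_multiplicity)
  have "indep_vars (\<lambda>_. borel) (\<lambda>a \<omega>. X a \<omega> ^ count N a) (set_mset N)"
    by (rule indep_vars_compose2[OF indep_vars_subset[OF indep assms(1)]]) measurable
  moreover have "\<And>a. a \<in> set_mset N \<Longrightarrow> integrable M (\<lambda>\<omega>. X a \<omega> ^ count N a)"
    using assms by (intro integrable_power) auto
  ultimately show "integrable M (\<lambda>\<omega>. \<Prod>a\<in>#N. X a \<omega>)"
    and "expectation (\<lambda>\<omega>. \<Prod>a\<in>#N. X a \<omega>) = (\<Prod>a\<in>set_mset N. expectation (\<lambda>\<omega>. X a \<omega> ^ count N a))"
    unfolding prod_eq by (simp_all add: indep_vars_integrable indep_vars_lebesgue_integral)
qed

lemma
  assumes "a \<in> I" "b \<in> I"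
  shows integrable_mult: "integrable M (\<lambda>\<omega>. X a \<omega> * X b \<omega>)"
    and expectation_mult: "expectation (\<lambda>\<omega>. X a \<omega> * X b \<omega>) = (if a = b then 1 else 0)"
proof -
  have "set_mset {#a, b#} \<subseteq> I" "\<And>x. count {#a, b#} x \<le> 4" using assms by auto
  note prod = integrable_prod_mset[OF this] expectation_prod_mset[OF this]
  then show "integrable M (\<lambda>\<omega>. X a \<omega> * X b \<omega>)" by simp
  show "expectation (\<lambda>\<omega>. X a \<omega> * X b \<omega>) = (if a = b then 1 else 0)"
    using prod(2) assms by (cases "a = b") (simp_all add: mean_zero second_moment flip: power2_eq_square)
qed

lemma
  assumes "a \<in> I" "b \<in> I" "c \<in> I" "d \<in> I"
  shows integrable_mult4: "integrable M (\<lambda>\<omega>. X a \<omega> * X b \<omega> * X c \<omega> * X d \<omega>)"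
    and expectation_mult4: "expectation (\<lambda>\<omega>. X a \<omega> * X b \<omega> * X c \<omega> * X d \<omega>) =
      (if a = b then 1 else 0) * (if c = d then 1 else 0)
      + (if a = c then 1 else 0) * (if b = d then 1 else 0)
      + (if a = d then 1 else 0) * (if b = c then 1 else 0)
      + (\<kappa> - 3) * ((if a = b then 1 else 0) * (if a = c then 1 else 0) * (if a = d then 1 else 0))"
    (is "?E = ?moment")
proof -
  have "set_mset {#a, b, c, d#} \<subseteq> I" "\<And>x. count {#a, b, c, d#} x \<le> 4" using assms by auto
  note prod = integrable_prod_mset[OF this] expectation_prod_mset[OF this]
  then show "integrable M (\<lambda>\<omega>. X a \<omega> * X b \<omega> * X c \<omega> * X d \<omega>)" by (simp add: mult_ac)
  have moments: "expectation (X x) = 0" "expectation (\<lambda>\<omega>. X x \<omega> * X x \<omega>) = 1"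
    "expectation (\<lambda>\<omega>. X x \<omega> * (X x \<omega> * (X x \<omega> * X x \<omega>))) = \<kappa>" if "x \<in> I" for x
    using that mean_zero second_moment fourth_moment
    by (simp_all add: power2_eq_square power4_eq_xxxx mult_ac)
  show "?E = ?moment"
    using prod(2) assms
    by (cases "a = b"; cases "a = c"; cases "a = d"; cases "b = c"; cases "b = d"; cases "c = d")
       (simp_all add: mult_ac moments numeral_eq_Suc prod.insert_if)
qed

lemma
  shows integrable_linear_form_square: "integrable M (\<lambda>\<omega>. (\<Sum>a\<in>I. u a * X a \<omega>)\<^sup>2)"
    and expectation_linear_form_square: "expectation (\<lambda>\<omega>. (\<Sum>a\<in>I. u a * X a \<omega>)\<^sup>2) = (\<Sum>a\<in>I. (u a)\<^sup>2)"
proof -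
  have expand: "(\<Sum>a\<in>I. u a * X a \<omega>)\<^sup>2 = (\<Sum>a\<in>I. \<Sum>b\<in>I. u a * u b * (X a \<omega> * X b \<omega>))" for \<omega>
    by (simp add: power2_eq_square sum_product mult_ac)
  show "integrable M (\<lambda>\<omega>. (\<Sum>a\<in>I. u a * X a \<omega>)\<^sup>2)"
    unfolding expand by (simp add: integrable_mult)
  have "expectation (\<lambda>\<omega>. (\<Sum>a\<in>I. u a * X a \<omega>)\<^sup>2)
      = (\<Sum>a\<in>I. \<Sum>b\<in>I. u a * u b * (if a = b then 1 else 0))"
    unfolding expand by (simp add: integrable_mult expectation_mult)
  also have "\<dots> = (\<Sum>a\<in>I. (u a)\<^sup>2)"
    using finite_index by (simp add: power2_eq_square if_distrib sum.delta cong: if_cong)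
  finally show "expectation (\<lambda>\<omega>. (\<Sum>a\<in>I. u a * X a \<omega>)\<^sup>2) = (\<Sum>a\<in>I. (u a)\<^sup>2)" .
qed

lemma
  shows integrable_linear_form_squares_mult:
      "integrable M (\<lambda>\<omega>. (\<Sum>a\<in>I. u a * X a \<omega>)\<^sup>2 * (\<Sum>a\<in>I. v a * X a \<omega>)\<^sup>2)"
    and expectation_linear_form_squares_mult:
      "expectation (\<lambda>\<omega>. (\<Sum>a\<in>I. u a * X a \<omega>)\<^sup>2 * (\<Sum>a\<in>I. v a * X a \<omega>)\<^sup>2)
        = (\<Sum>a\<in>I. (u a)\<^sup>2) * (\<Sum>a\<in>I. (v a)\<^sup>2) + 2 * (\<Sum>a\<in>I. u a * v a)\<^sup>2
          + (\<kappa> - 3) * (\<Sum>a\<in>I. (u a)\<^sup>2 * (v a)\<^sup>2)"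
proof -
  let ?w = "\<lambda>a b c d. u a * u b * v c * v d"
  have expand: "(\<Sum>a\<in>I. u a * X a \<omega>)\<^sup>2 * (\<Sum>a\<in>I. v a * X a \<omega>)\<^sup>2
      = (\<Sum>a\<in>I. \<Sum>b\<in>I. \<Sum>c\<in>I. \<Sum>d\<in>I. ?w a b c d * (X a \<omega> * X b \<omega> * X c \<omega> * X d \<omega>))" for \<omega>
  proof -
    have square: "(\<Sum>a\<in>I. w a * x a)\<^sup>2 = (\<Sum>a\<in>I. \<Sum>b\<in>I. w a * w b * (x a * x b))" for w x :: "'i \<Rightarrow> real"
      by (simp add: power2_eq_square sum_product mult_ac)
    show ?thesis
      unfolding square by (simp only: sum_distrib_right, simp only: sum_distrib_left) (simp add: mult_ac)
  qed
  show "integrable M (\<lambda>\<omega>. (\<Sum>a\<in>I. u a * X a \<omega>)\<^sup>2 * (\<Sum>a\<in>I. v a * X a \<omega>)\<^sup>2)"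
    unfolding expand by (simp add: integrable_mult4)
  let ?\<delta> = "\<lambda>a b. if a = b then 1 else (0::real)"
  have "expectation (\<lambda>\<omega>. (\<Sum>a\<in>I. u a * X a \<omega>)\<^sup>2 * (\<Sum>a\<in>I. v a * X a \<omega>)\<^sup>2)
      = (\<Sum>a\<in>I. \<Sum>b\<in>I. \<Sum>c\<in>I. \<Sum>d\<in>I. ?w a b c d * expectation (\<lambda>\<omega>. X a \<omega> * X b \<omega> * X c \<omega> * X d \<omega>))"
    unfolding expand by (simp add: integrable_mult4)
  also have "\<dots> = (\<Sum>a\<in>I. \<Sum>b\<in>I. \<Sum>c\<in>I. \<Sum>d\<in>I. ?w a b c d *
      (?\<delta> a b * ?\<delta> c d + ?\<delta> a c * ?\<delta> b d + ?\<delta> a d * ?\<delta> b c + (\<kappa> - 3) * (?\<delta> a b * ?\<delta> a c * ?\<delta> a d)))"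
    by (intro sum.cong refl) (simp add: expectation_mult4)
  also have "\<dots> = (\<Sum>a\<in>I. \<Sum>b\<in>I. \<Sum>c\<in>I. \<Sum>d\<in>I. ?w a b c d * (?\<delta> a b * ?\<delta> c d))
        + (\<Sum>a\<in>I. \<Sum>b\<in>I. \<Sum>c\<in>I. \<Sum>d\<in>I. ?w a b c d * (?\<delta> a c * ?\<delta> b d))
        + (\<Sum>a\<in>I. \<Sum>b\<in>I. \<Sum>c\<in>I. \<Sum>d\<in>I. ?w a b c d * (?\<delta> a d * ?\<delta> b c))
        + (\<kappa> - 3) * (\<Sum>a\<in>I. \<Sum>b\<in>I. \<Sum>c\<in>I. \<Sum>d\<in>I. ?w a b c d * (?\<delta> a b * ?\<delta> a c * ?\<delta> a d))"
    by (simp only: distrib_left sum.distrib sum_distrib_left mult.left_commute[of "\<kappa> - 3"])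
  also have "\<dots> = (\<Sum>a\<in>I. (u a)\<^sup>2) * (\<Sum>a\<in>I. (v a)\<^sup>2) + (\<Sum>a\<in>I. u a * v a)\<^sup>2
        + (\<Sum>a\<in>I. u a * v a)\<^sup>2 + (\<kappa> - 3) * (\<Sum>a\<in>I. (u a)\<^sup>2 * (v a)\<^sup>2)"
  proof -
    have delta: "x * (if P then y else 0) = (if P then x * y else 0)"
      "(if P then y else 0) * x = (if P then y * x else 0)"
      "(\<Sum>a\<in>A. if P then f a else 0) = (if P then sum f A else 0)"
      for x y :: real and P and f :: "'i \<Rightarrow> real" and A by simp_all
    note simps = delta sum.delta sum.delta' power2_eq_square sum_distrib_left sum_distrib_right mult.assoc
    have "(\<Sum>a\<in>I. \<Sum>b\<in>I. \<Sum>c\<in>I. \<Sum>d\<in>I. ?w a b c d * (?\<delta> a b * ?\<delta> c d))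
        = (\<Sum>a\<in>I. (u a)\<^sup>2) * (\<Sum>a\<in>I. (v a)\<^sup>2)"
      using finite_index by (simp add: simps) (subst sum.swap, simp add: mult_ac)
    moreover have "(\<Sum>a\<in>I. \<Sum>b\<in>I. \<Sum>c\<in>I. \<Sum>d\<in>I. ?w a b c d * (?\<delta> a c * ?\<delta> b d))
        = (\<Sum>a\<in>I. u a * v a)\<^sup>2"
      using finite_index by (simp add: simps) (subst sum.swap, simp add: mult_ac)
    moreover have "(\<Sum>a\<in>I. \<Sum>b\<in>I. \<Sum>c\<in>I. \<Sum>d\<in>I. ?w a b c d * (?\<delta> a d * ?\<delta> b c))
        = (\<Sum>a\<in>I. u a * v a)\<^sup>2"
      using finite_index by (simp add: simps) (subst sum.swap, simp add: mult_ac)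
    moreover have "(\<Sum>a\<in>I. \<Sum>b\<in>I. \<Sum>c\<in>I. \<Sum>d\<in>I. ?w a b c d * (?\<delta> a b * ?\<delta> a c * ?\<delta> a d))
        = (\<Sum>a\<in>I. (u a)\<^sup>2 * (v a)\<^sup>2)"
      using finite_index by (simp add: simps)
    ultimately show ?thesis by simp
  qed
  finally show "expectation (\<lambda>\<omega>. (\<Sum>a\<in>I. u a * X a \<omega>)\<^sup>2 * (\<Sum>a\<in>I. v a * X a \<omega>)\<^sup>2)
        = (\<Sum>a\<in>I. (u a)\<^sup>2) * (\<Sum>a\<in>I. (v a)\<^sup>2) + 2 * (\<Sum>a\<in>I. u a * v a)\<^sup>2
          + (\<kappa> - 3) * (\<Sum>a\<in>I. (u a)\<^sup>2 * (v a)\<^sup>2)" by simp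
qed

lemma covariance_sum_linear_form_squares:
  fixes U V :: "'t \<Rightarrow> 'i \<Rightarrow> real"
  assumes "finite S" "finite S'"
  shows "covariance (\<lambda>\<omega>. \<Sum>t\<in>S. (\<Sum>a\<in>I. U t a * X a \<omega>)\<^sup>2) (\<lambda>\<omega>. \<Sum>s\<in>S'. (\<Sum>a\<in>I. V s a * X a \<omega>)\<^sup>2)
    = (\<Sum>t\<in>S. \<Sum>s\<in>S'. 2 * (\<Sum>a\<in>I. U t a * V s a)\<^sup>2 + (\<kappa> - 3) * (\<Sum>a\<in>I. (U t a)\<^sup>2 * (V s a)\<^sup>2))"
proof -
  have "covariance (\<lambda>\<omega>. \<Sum>t\<in>S. (\<Sum>a\<in>I. U t a * X a \<omega>)\<^sup>2) (\<lambda>\<omega>. \<Sum>s\<in>S'. (\<Sum>a\<in>I. V s a * X a \<omega>)\<^sup>2)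
    = (\<Sum>t\<in>S. \<Sum>s\<in>S'. expectation (\<lambda>\<omega>. (\<Sum>a\<in>I. U t a * X a \<omega>)\<^sup>2 * (\<Sum>a\<in>I. V s a * X a \<omega>)\<^sup>2)
        - expectation (\<lambda>\<omega>. (\<Sum>a\<in>I. U t a * X a \<omega>)\<^sup>2) * expectation (\<lambda>\<omega>. (\<Sum>a\<in>I. V s a * X a \<omega>)\<^sup>2))"
    unfolding covariance_def sum_product
    by (simp add: integrable_linear_form_square integrable_linear_form_squares_mult sum_product
        sum_subtractf)
  then show ?thesis
    by (simp add: expectation_linear_form_square expectation_linear_form_squares_mult)
qed

end

lemma sum_delta_mult:
  fixes f :: "'a \<Rightarrow> 'b::semiring_1"
  assumes "finite A"
  shows "(\<Sum>x\<in>A. (if x = i then 1 else 0) * f x) = (if i \<in> A then f i else 0)"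
proof -
  have "(if x = i then 1 else 0) * f x = (if x = i then f x else 0)" for x by simp
  then show ?thesis using assms by (simp add: sum.delta')
qed

lemma sum_cartesian_product_mult:
  "(\<Sum>a\<in>A \<times> B. f (fst a) * g (snd a)) = sum f A * (sum g B :: 'c::comm_semiring_0)"
  by (simp add: sum.cartesian_product sum_product case_prod_beta)

definition contrast :: "nat \<Rightarrow> nat \<Rightarrow> nat \<Rightarrow> real" where
  "contrast i j x = (if x = i then 1 else 0) - (if x = j then 1 else 0)"

lemma sum_contrast_mult:
  assumes "i < n" "j < n"
  shows "(\<Sum>x<n. contrast i j x * f x) = f i - f j"
  using assms by (simp add: contrast_def left_diff_distrib sum_subtractf sum_delta_mult)

lemma
  assumes "i < j" "j < n" "k < l" "l < n"
  shows contrast_inner_square: "(\<Sum>x<n. contrast i j x * contrast k l x)\<^sup>2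
      = (if (i, j) = (k, l) then 4 else if {i, j} \<inter> {k, l} \<noteq> {} then 1 else 0)"
      (is "_ = ?inner")
    and contrast_square_inner: "(\<Sum>x<n. (contrast i j x)\<^sup>2 * (contrast k l x)\<^sup>2)
      = (if (i, j) = (k, l) then 2 else if {i, j} \<inter> {k, l} \<noteq> {} then 1 else 0)"
      (is "_ = ?squares")
proof -
  have inner: "(\<Sum>x<n. contrast i j x * contrast k l x) = contrast k l i - contrast k l j"
    using assms by (simp add: sum_contrast_mult)
  show "(\<Sum>x<n. contrast i j x * contrast k l x)\<^sup>2 = ?inner"
    unfolding inner using assms by (auto simp: contrast_def)
  have "(contrast i j x)\<^sup>2 = (if x = i then 1 else 0) + (if x = j then 1 else 0)" for x
    using assms by (simp add: contrast_def)
  then have inner_squares: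
    "(\<Sum>x<n. (contrast i j x)\<^sup>2 * (contrast k l x)\<^sup>2) = (contrast k l i)\<^sup>2 + (contrast k l j)\<^sup>2"
    using assms by (simp add: distrib_right sum.distrib sum_delta_mult)
  show "(\<Sum>x<n. (contrast i j x)\<^sup>2 * (contrast k l x)\<^sup>2) = ?squares"
    unfolding inner_squares using assms by (auto simp: contrast_def)
qed

lemma contrast_moment_combination_eq_Sigma_entry:
  fixes A B c q :: real
  assumes "i < j" "j < n" "k < l" "l < n" and D: "8 * A + 2 * c * B \<noteq> 0"
  shows "(2 * (\<Sum>x<n. contrast i j x * contrast k l x)\<^sup>2 * A
          + c * (\<Sum>x<n. (contrast i j x)\<^sup>2 * (contrast k l x)\<^sup>2) * B) / q
    = (8 * A + 2 * c * B) / q * Sigma_entry ((2 * A + c * B) / (8 * A + 2 * c * B)) (i, j) (k, l)"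
proof -
  have "(8 * A + 2 * c * B) * ((2 * A + c * B) / (8 * A + 2 * c * B)) = 2 * A + c * B"
    using D by simp
  then have "2 * (\<Sum>x<n. contrast i j x * contrast k l x)\<^sup>2 * A
          + c * (\<Sum>x<n. (contrast i j x)\<^sup>2 * (contrast k l x)\<^sup>2) * B
      = (8 * A + 2 * c * B) * Sigma_entry ((2 * A + c * B) / (8 * A + 2 * c * B)) (i, j) (k, l)"
    unfolding contrast_inner_square[OF assms(1-4)] contrast_square_inner[OF assms(1-4)] Sigma_entry_def
    by auto
  then show ?thesis by simp
qed

lemma entry_norm_hadamard_self: "entry_norm p (hadamard A A) = (\<Sum>t<p. \<Sum>s<p. (A t s)\<^sup>2)"
  by (simp add: entry_norm_def hadamard_def power2_eq_square)

lemma entry_norm_mmul_hadamard_self: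
  "entry_norm p (mmul p (hadamard T T) (hadamard T T)) = (\<Sum>t<p. \<Sum>s<p. \<Sum>k<p. (T t k)\<^sup>2 * (T k s)\<^sup>2)"
  unfolding entry_norm_def mmul_def hadamard_def power2_eq_square
  by (intro sum.cong refl abs_of_nonneg sum_nonneg) simp

lemma mmul_self_symmetric:
  assumes "symmetric_mat p T" "t < p" "s < p"
  shows "mmul p T T t s = (\<Sum>k<p. T t k * T s k)"
  using assms unfolding mmul_def symmetric_mat_def by (intro sum.cong) auto

lemma sum_diag_square_le_entry_norm_hadamard_self:
  "(\<Sum>t<p. (A t t)\<^sup>2) \<le> entry_norm p (hadamard A A)"
  unfolding entry_norm_hadamard_self by (intro sum_mono member_le_sum) auto

lemma entry_norm_mmul_hadamard_self_eq_dim: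
  assumes sym: "symmetric_mat p T" and diag: "\<And>t. t < p \<Longrightarrow> mmul p T T t t = 1"
  shows "entry_norm p (mmul p (hadamard T T) (hadamard T T)) = real p"
proof -
  have row: "(\<Sum>k<p. (T t k)\<^sup>2) = 1" if "t < p" for t
    using diag[OF that] mmul_self_symmetric[OF sym that that] by (simp add: power2_eq_square)
  have "(\<Sum>t<p. \<Sum>s<p. \<Sum>k<p. (T t k)\<^sup>2 * (T k s)\<^sup>2) = (\<Sum>t<p. \<Sum>k<p. (T t k)\<^sup>2 * (\<Sum>s<p. (T k s)\<^sup>2))"
    unfolding sum_distrib_left by (rule sum.cong[OF refl], rule sum.swap)
  also have "\<dots> = real p" by (simp add: row)
  finally show ?thesis by (simp add: entry_norm_mmul_hadamard_self)
qed

lemma obsX_diff_eq_linear_form: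
  assumes "i < n" "j < n"
  shows "obsX p T eps i t \<omega> - obsX p T eps j t \<omega>
    = (\<Sum>a\<in>{..<n} \<times> {..<p}. T t (snd a) * contrast i j (fst a) * (\<lambda>(x, l). eps x l) a \<omega>)"
proof -
  have "obsX p T eps i t \<omega> - obsX p T eps j t \<omega> = (\<Sum>x<n. contrast i j x * obsX p T eps x t \<omega>)"
    using assms by (simp add: sum_contrast_mult)
  also have "\<dots> = (\<Sum>a\<in>{..<n} \<times> {..<p}. T t (snd a) * contrast i j (fst a) * (\<lambda>(x, l). eps x l) a \<omega>)"
    by (simp add: obsX_def sum.cartesian_product sum_distrib_left case_prod_beta mult_ac)
  finally show ?thesis .
qed

lemma covariance_Svar:
  assumes family: "standardized_indep_family M (\<lambda>(x, l). eps x l) ({..<n} \<times> {..<p}) \<kappa>"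
    and sym: "symmetric_mat p T"
    and "i < n" "j < n" "k < n" "l < n"
  shows "prob_space.covariance M (Svar p T eps i j) (Svar p T eps k l)
    = (2 * (\<Sum>x<n. contrast i j x * contrast k l x)\<^sup>2 * entry_norm p (hadamard (mmul p T T) (mmul p T T))
       + (\<kappa> - 3) * (\<Sum>x<n. (contrast i j x)\<^sup>2 * (contrast k l x)\<^sup>2)
         * entry_norm p (mmul p (hadamard T T) (hadamard T T))) / real p"
proof -
  interpret standardized_indep_family M "\<lambda>(x, l). eps x l" "{..<n} \<times> {..<p}" \<kappa>
    by (fact family)
  define U where "U i j t a = T t (snd a) * contrast i j (fst a)" for i j t and a :: "nat \<times> nat"
  define Q where "Q i j \<omega> = (\<Sum>t<p. (\<Sum>a\<in>{..<n} \<times> {..<p}. U i j t a * (\<lambda>(x, l). eps x l) a \<omega>)\<^sup>2)"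
    for i j \<omega>
  have Svar: "Svar p T eps i j = (\<lambda>\<omega>. 1 / sqrt (real p) * Q i j \<omega>)" if "i < n" "j < n" for i j
    using that by (simp add: fun_eq_iff Svar_def yvar_def Q_def U_def obsX_diff_eq_linear_form)
  let ?c = "\<Sum>x<n. contrast i j x * contrast k l x"
  let ?d = "\<Sum>x<n. (contrast i j x)\<^sup>2 * (contrast k l x)\<^sup>2"
  have inner: "(\<Sum>a\<in>{..<n} \<times> {..<p}. U i j t a * U k l s a) = ?c * (\<Sum>q<p. T t q * T s q)"
    and inner_squares: "(\<Sum>a\<in>{..<n} \<times> {..<p}. (U i j t a)\<^sup>2 * (U k l s a)\<^sup>2)
      = ?d * (\<Sum>q<p. (T t q)\<^sup>2 * (T s q)\<^sup>2)" for t s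
    unfolding U_def by (subst sum_cartesian_product_mult[symmetric], simp add: power_mult_distrib mult_ac)+
  have "covariance (Svar p T eps i j) (Svar p T eps k l) = covariance (Q i j) (Q k l) / real p"
    using \<open>i < n\<close> \<open>j < n\<close> \<open>k < n\<close> \<open>l < n\<close>
    by (simp only: Svar covariance_scale) simp
  also have "covariance (Q i j) (Q k l)
      = (\<Sum>t<p. \<Sum>s<p. 2 * ?c\<^sup>2 * (\<Sum>q<p. T t q * T s q)\<^sup>2
          + (\<kappa> - 3) * ?d * (\<Sum>q<p. (T t q)\<^sup>2 * (T s q)\<^sup>2))"
    unfolding Q_def covariance_sum_linear_form_squares[OF finite_lessThan finite_lessThan] inner inner_squares
    by (simp add: power_mult_distrib mult_ac)
  also have "\<dots> = 2 * ?c\<^sup>2 * entry_norm p (hadamard (mmul p T T) (mmul p T T))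
      + (\<kappa> - 3) * ?d * entry_norm p (mmul p (hadamard T T) (hadamard T T))"
    using sym
    by (simp add: entry_norm_hadamard_self entry_norm_mmul_hadamard_self mmul_self_symmetric
        symmetric_mat_def sum.distrib sum_distrib_left)
  finally show ?thesis .
qed

lemma moment_combination_bounds:
  fixes A B \<kappa> :: real
  assumes "0 < B" "B \<le> A" "1 \<le> \<kappa>"
  shows "4 * B \<le> 8 * A + 2 * (\<kappa> - 3) * B"
    and "\<kappa> \<le> 5 \<Longrightarrow> (2 * A + (\<kappa> - 3) * B) / (8 * A + 2 * (\<kappa> - 3) * B) \<le> 1 / 3"
proof -
  have "B \<le> \<kappa> * B" using mult_right_mono[OF assms(3), of B] assms(1) by simp
  then show lower: "4 * B \<le> 8 * A + 2 * (\<kappa> - 3) * B"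
    using assms(2) by (simp add: algebra_simps)
  assume "\<kappa> \<le> 5"
  then have "(\<kappa> - 3) * B \<le> 2 * B"
    using assms(1) by (intro mult_right_mono) auto
  then have "(\<kappa> - 3) * B \<le> 2 * A"
    using assms(2) by linarith
  then show "(2 * A + (\<kappa> - 3) * B) / (8 * A + 2 * (\<kappa> - 3) * B) \<le> 1 / 3"
    using lower assms(1) by (simp add: field_simps)
qed

theorem mainTheorem4:
  fixes M :: "'a measure" and eps :: "nat \<Rightarrow> nat \<Rightarrow> 'a \<Rightarrow> real"
    and n p :: nat and r :: "nat \<Rightarrow> real" and T :: "nat \<Rightarrow> nat \<Rightarrow> real" and \<kappa>4 :: real
  assumes M: "prob_space M"
    and n: "n \<ge> 3" and p: "p \<ge> 1"
    and r0: "r 0 = 1" and rpos: "\<forall>k. 0 < k \<longrightarrow> r k > 0"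
    and Rpd: "pos_def_mat p (toeplitz r)"
    and Tsqrt: "is_psd_sqrt p T (toeplitz r)"
    and meas: "\<forall>i<n. \<forall>k<p. eps i k \<in> borel_measurable M"
    and indep: "prob_space.indep_vars M (\<lambda>_. borel) (\<lambda>(i, k). eps i k) ({..<n} \<times> {..<p})"
    and ident: "\<forall>i<n. \<forall>k<p. distr M borel (eps i k) = distr M borel (eps 0 0)"
    and int4: "\<forall>i<n. \<forall>k<p. integrable M (\<lambda>\<omega>. (eps i k \<omega>)^4)"
    and mean0: "\<forall>i<n. \<forall>k<p. prob_space.expectation M (eps i k) = 0"
    and var1: "\<forall>i<n. \<forall>k<p. prob_space.expectation M (\<lambda>\<omega>. (eps i k \<omega>)^2) = 1"
    and mom4: "\<forall>i<n. \<forall>k<p. prob_space.expectation M (\<lambda>\<omega>. (eps i k \<omega>)^4) = \<kappa>4"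
  shows
    "let A = entry_norm p (hadamard (mmul p T T) (mmul p T T));
         B = entry_norm p (mmul p (hadamard T T) (hadamard T T));
         b = (8 * A + 2 * (\<kappa>4 - 3) * B) / real p;
         \<rho> = (2 * A + (\<kappa>4 - 3) * B) / (8 * A + 2 * (\<kappa>4 - 3) * B)
     in (\<forall>i j k l. i < j \<and> j < n \<and> k < l \<and> l < n \<longrightarrow>
           prob_space.covariance M (Svar p T eps i j) (Svar p T eps k l)
             = b * Sigma_entry \<rho> (i, j) (k, l))
        \<and> A \<ge> B \<and> b \<ge> 2 \<and> (\<kappa>4 \<le> 5 \<longrightarrow> \<rho> \<le> 1 / 3)"
proof -
  interpret prob_space M by (fact M)
  have family: "standardized_indep_family M (\<lambda>(i, k). eps i k) ({..<n} \<times> {..<p}) \<kappa>4"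
    using indep meas int4 mean0 var1 mom4 by unfold_locales auto
  have sym: "symmetric_mat p T"
    using Tsqrt by (simp add: is_psd_sqrt_def pos_semidef_mat_def)
  have diag: "mmul p T T t t = 1" if "t < p" for t
    using Tsqrt that r0 by (simp add: is_psd_sqrt_def toeplitz_def)
  define A where "A = entry_norm p (hadamard (mmul p T T) (mmul p T T))"
  define B where "B = entry_norm p (mmul p (hadamard T T) (hadamard T T))"
  have B: "B = real p"
    unfolding B_def using entry_norm_mmul_hadamard_self_eq_dim[OF sym diag] .
  have A: "real p \<le> A"
    using sum_diag_square_le_entry_norm_hadamard_self[where A = "mmul p T T" and p = p] by (simp add: A_def diag)
  have \<kappa>4: "1 \<le> \<kappa>4"
    using n p by (intro standardized_indep_family.fourth_moment_ge_one[OF family]) (auto simp: lessThan_empty_iff)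
  have B_pos: "0 < B" and A_ge_B: "B \<le> A"
    using A B p by auto
  note bounds = moment_combination_bounds[OF B_pos A_ge_B \<kappa>4]
  have cov: "prob_space.covariance M (Svar p T eps i j) (Svar p T eps k l)
      = (8 * A + 2 * (\<kappa>4 - 3) * B) / real p
        * Sigma_entry ((2 * A + (\<kappa>4 - 3) * B) / (8 * A + 2 * (\<kappa>4 - 3) * B)) (i, j) (k, l)"
    if "i < j" "j < n" "k < l" "l < n" for i j k l
    using that bounds(1) B_pos
    by (simp add: covariance_Svar[OF family sym] contrast_moment_combination_eq_Sigma_entry A_def B_def)
  show ?thesis
    unfolding Let_def A_def[symmetric] B_def[symmetric]
    using cov bounds A_ge_B B p by (auto simp: field_simps)
qed

end
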